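(* For every integer $c\ge 3$ and every instance with two groups of binary agents, there exists an allocation that is 1-out-of-$c$ MMS-fair for at least a $1-1/2^{c-1}$ fraction of the agents in each group.
   Context: There is a finite set $G$ of goods and two groups $A_1,A_2$ of agents, $n_i\ge1$ agents in $A_i$. A binary agent has an additive utility with $u_a(\{g\})\in\{0,1\}$. An allocation is a partition $(G_1,G_2)$ of $G$; agents of $A_i$ get $u_a(G_i)$. For an integer $c$, $\mathrm{MMS}^c_a(G)$ is the maximum, over partitions of $G$ into $c$ sets, of the minimum of $u_a$ over the sets. The allocation is 1-out-of-$c$ MMS-fair for $a\in A_i$ if $u_a(G_i)\ge \mathrm{MMS}^c_a(G)$; for a binary agent desiring $r$ goods this means $G_i$ contains at least $\lfloor r/c\rfloor$ goods she desires. *)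

theory Defs
  imports Main Complex_Main
begin

definition util :: "('g \<Rightarrow> nat) \<Rightarrow> 'g set \<Rightarrow> nat" where
  "util u S = (\<Sum>g\<in>S. u g)"

definition binary_on :: "'g set \<Rightarrow> ('g \<Rightarrow> nat) \<Rightarrow> bool" where
  "binary_on G u \<longleftrightarrow> (\<forall>g\<in>G. u g \<in> {0, 1})"

text \<open>Partitions of G into c (possibly empty) parts are encoded as labellings
  p : G -> {0..<c}; part i is {g\<in>G. p g = i}.
  MMS^c(G) = max over partitions of the minimum utility of a part.\<close>
definition MMS :: "nat \<Rightarrow> ('g \<Rightarrow> nat) \<Rightarrow> 'g set \<Rightarrow> nat" where
  "MMS c u G = Max {Min {util u {g\<in>G. p g = i} | i. i < c} | p. \<forall>g\<in>G. p g < c}"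

definition mms_fair :: "nat \<Rightarrow> ('g \<Rightarrow> nat) \<Rightarrow> 'g set \<Rightarrow> 'g set \<Rightarrow> bool" where
  "mms_fair c u G B \<longleftrightarrow> util u B \<ge> MMS c u G"

end

theory Submission
  imports Defs
begin

text \<open>Give a uniformly random set S \<subseteq> G to the first group and G - S to the second.
  A binary agent desiring r goods is MMS-fair as soon as her bundle contains
  \<lfloor>r/c\<rfloor> of them, so she fails with probability at most
  2^-r * (sum of (r choose j) over j < \<lfloor>r/c\<rfloor>), which is at most 2^-c for c \<ge> 3.
  Hence the expected failure fractions of the two groups sum to at most 2^(1-c),
  and some S attains this, bounding the failure fraction of each group by 2^(1-c).\<close>

definition binomial_tail :: "nat \<Rightarrow> nat \<Rightarrow> nat" where
  "binomial_tail n k = (\<Sum>j<k. n choose j)"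

lemma binomial_tail_0 [simp]: "binomial_tail n 0 = 0"
  by (simp add: binomial_tail_def)

lemma binomial_tail_Suc: "binomial_tail n (Suc k) = binomial_tail n k + (n choose k)"
  by (simp add: binomial_tail_def)

lemma binomial_tail_mono: "k \<le> k' \<Longrightarrow> binomial_tail n k \<le> binomial_tail n k'"
  unfolding binomial_tail_def by (rule sum_mono2) auto

lemma binomial_tail_Suc_left: "binomial_tail (Suc n) k = binomial_tail n k + binomial_tail n (k - 1)"
proof (induction k)
  case (Suc k)
  then show ?case by (cases k) (simp_all add: binomial_tail_Suc)
qed simp

lemma binomial_tail_double: "binomial_tail (Suc n) k \<le> 2 * binomial_tail n k"
  using binomial_tail_Suc_left[of n k] binomial_tail_mono[of "k - 1" k n] by simp

text \<open>Vandermonde's identity, with the terms of index at least 2 all bounded by the one of index 2.\<close>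

lemma binomial_tail_add_le:
  "binomial_tail (n + c) k
     \<le> binomial_tail n k + c * binomial_tail n (k - 1) + (2^c - 1 - c) * binomial_tail n (k - 2)"
proof (induction c arbitrary: k)
  case (Suc c)
  define X where "X = 2^c - 1 - c"
  have X: "X + 1 + c = 2^c"
    using less_exp[of c] unfolding X_def by arith
  have "binomial_tail (n + Suc c) k = binomial_tail (n + c) k + binomial_tail (n + c) (k - 1)"
    by (simp add: binomial_tail_Suc_left)
  also have "\<dots> \<le> (binomial_tail n k + c * binomial_tail n (k - 1) + X * binomial_tail n (k - 2))
      + (binomial_tail n (k - 1) + c * binomial_tail n (k - 2) + X * binomial_tail n (k - 1 - 2))"
    using Suc.IH[of k] Suc.IH[of "k - 1"] unfolding X_def by (simp add: numeral_2_eq_2)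
  also have "\<dots> \<le> (binomial_tail n k + c * binomial_tail n (k - 1) + X * binomial_tail n (k - 2))
      + (binomial_tail n (k - 1) + c * binomial_tail n (k - 2) + X * binomial_tail n (k - 2))"
    using binomial_tail_mono[of "k - 1 - 2" "k - 2" n] by simp
  also have "\<dots> = binomial_tail n k + Suc c * binomial_tail n (k - 1)
      + (X + X + c) * binomial_tail n (k - 2)"
    by (simp add: algebra_simps)
  moreover have "X + X + c = 2^Suc c - 1 - Suc c"
    using X by simp
  ultimately show ?case
    by simp
qed simp

lemma choose_Suc_le_mult: "(c * Suc k) choose (Suc k) \<le> c * ((c * Suc k) choose k)"
proof -
  let ?n = "c * Suc k"
  have "Suc k * (?n choose Suc k) = (?n - k) * (?n choose k)"
    using binomial_absorption[of k ?n] binomial_absorb_comp[of ?n k] by simp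
  also have "\<dots> \<le> Suc k * (c * (?n choose k))"
    by (simp add: algebra_simps)
  finally show ?thesis
    by (metis mult_le_cancel1 zero_less_Suc)
qed

lemma exp_gt_double_Suc: "c \<ge> 3 \<Longrightarrow> 2 * c + 1 < (2::nat)^c"
  by (induction c rule: dec_induct) simp_all

text \<open>Going from c k to c (k + 1) multiplies the tail by at most 2^c: the new leading term
  is absorbed by (n choose k + 1) \<le> c (n choose k) and c \<le> 2^c - 1 - c, which needs c \<ge> 3.\<close>

lemma binomial_tail_mult_le:
  assumes "c \<ge> 3"
  shows "binomial_tail (c * Suc k) (Suc k) \<le> 2^(c * k)"
proof (induction k)
  case (Suc k)
  let ?n = "c * Suc k"
  define X where "X = 2^c - 1 - c"
  have X: "1 + c + X = 2^c"
    using less_exp[of c] unfolding X_def by arith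
  have cX: "c \<le> X"
    using exp_gt_double_Suc[OF assms] X by linarith
  have "binomial_tail (?n + c) (Suc (Suc k))
      \<le> binomial_tail ?n (Suc (Suc k)) + c * binomial_tail ?n (Suc k) + X * binomial_tail ?n k"
    using binomial_tail_add_le[of ?n c "Suc (Suc k)"] unfolding X_def by simp
  also have "\<dots> = binomial_tail ?n (Suc k) + (?n choose Suc k)
      + c * binomial_tail ?n (Suc k) + X * binomial_tail ?n k"
    by (simp add: binomial_tail_Suc)
  also have "\<dots> \<le> binomial_tail ?n (Suc k) + X * (?n choose k)
      + c * binomial_tail ?n (Suc k) + X * binomial_tail ?n k"
    using choose_Suc_le_mult[of c k] mult_le_mono1[OF cX, of "?n choose k"] by linarith
  also have "\<dots> = (1 + c + X) * binomial_tail ?n (Suc k)"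
    by (simp add: binomial_tail_Suc algebra_simps)
  also have "\<dots> \<le> 2^c * 2^(c * k)"
    unfolding X using Suc.IH by simp
  finally have "binomial_tail (?n + c) (Suc (Suc k)) \<le> 2^c * 2^(c * k)" .
  moreover have "c * Suc (Suc k) = ?n + c" and "(2::nat)^(c * Suc k) = 2^c * 2^(c * k)"
    by (simp_all add: power_add)
  ultimately show ?case
    by (simp only:)
qed (simp add: binomial_tail_def)

lemma binomial_tail_le:
  assumes "c \<ge> 3" and "k * c \<le> n"
  shows "2^c * binomial_tail n k \<le> 2^n"
proof (cases k)
  case (Suc k')
  obtain d where n: "n = c * Suc k' + d"
    using assms(2) Suc by (metis le_Suc_ex mult.commute)
  have "binomial_tail (c * Suc k' + e) k \<le> 2^e * binomial_tail (c * Suc k') k" for e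
  proof (induction e)
    case (Suc e)
    then show ?case
      using binomial_tail_double[of "c * Suc k' + e" k] by simp
  qed simp
  also have "2^d * binomial_tail (c * Suc k') k \<le> 2^d * 2^(c * k')"
    using binomial_tail_mult_le[OF assms(1), of k'] Suc by simp
  finally have "2^c * binomial_tail n k \<le> 2^c * (2^d * 2^(c * k'))"
    unfolding n by simp
  also have "\<dots> = 2^n"
    unfolding n by (simp add: power_add mult_ac)
  finally show ?thesis .
qed simp

lemma card_subsets_card_less:
  assumes "finite D"
  shows "card {T. T \<subseteq> D \<and> card T < k} = binomial_tail (card D) k"
proof (induction k)
  case (Suc k)
  have "{T. T \<subseteq> D \<and> card T < Suc k} = {T. T \<subseteq> D \<and> card T < k} \<union> {T. T \<subseteq> D \<and> card T = k}"
    by auto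
  moreover have "finite {T. T \<subseteq> D \<and> card T < k}" "finite {T. T \<subseteq> D \<and> card T = k}"
    using assms by (auto intro: finite_subset[of _ "Pow D"])
  ultimately have "card {T. T \<subseteq> D \<and> card T < Suc k}
      = card {T. T \<subseteq> D \<and> card T < k} + card {T. T \<subseteq> D \<and> card T = k}"
    by (simp add: card_Un_disjoint disjoint_iff)
  then show ?case
    using Suc n_subsets[OF assms, of k] by (simp add: binomial_tail_Suc)
qed simp

lemma card_subsets_meeting_less:
  assumes "finite G" and "D \<subseteq> G"
  shows "card {S. S \<subseteq> G \<and> card (S \<inter> D) < k} = binomial_tail (card D) k * 2 ^ card (G - D)"
proof -
  have "bij_betw (\<lambda>S. (S \<inter> D, S - D)) {S. S \<subseteq> G \<and> card (S \<inter> D) < k}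
      ({T. T \<subseteq> D \<and> card T < k} \<times> Pow (G - D))"
  proof (rule bij_betw_byWitness[where f' = "\<lambda>(T, U). T \<union> U"])
    show "(\<lambda>(T, U). T \<union> U) ` ({T. T \<subseteq> D \<and> card T < k} \<times> Pow (G - D))
        \<subseteq> {S. S \<subseteq> G \<and> card (S \<inter> D) < k}"
    proof clarify
      fix T U assume "T \<subseteq> D" "card T < k" "U \<subseteq> G - D"
      moreover from this have "(T \<union> U) \<inter> D = T"
        by blast
      ultimately show "T \<union> U \<subseteq> G \<and> card ((T \<union> U) \<inter> D) < k"
        using assms(2) by auto
    qed
  qed auto
  then have "card {S. S \<subseteq> G \<and> card (S \<inter> D) < k}
      = card ({T. T \<subseteq> D \<and> card T < k} \<times> Pow (G - D))"
    by (rule bij_betw_same_card)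
  also have "\<dots> = binomial_tail (card D) k * 2 ^ card (G - D)"
    using assms finite_subset[OF assms(2)]
    by (simp add: card_cartesian_product card_Pow card_subsets_card_less)
  finally show ?thesis .
qed

lemma card_subsets_missing_quota_le:
  assumes "finite G" and "D \<subseteq> G" and "c \<ge> 3" and "k * c \<le> card D"
  shows "2^c * card {S. S \<subseteq> G \<and> card (S \<inter> D) < k} \<le> 2 ^ card G"
proof -
  have "2^c * card {S. S \<subseteq> G \<and> card (S \<inter> D) < k}
      = 2^c * binomial_tail (card D) k * 2 ^ card (G - D)"
    using card_subsets_meeting_less[OF assms(1,2)] by simp
  also have "\<dots> \<le> 2 ^ card D * 2 ^ card (G - D)"
    using binomial_tail_le[OF assms(3,4)] by simp
  also have "\<dots> = 2 ^ card G"
    using card_Diff_subset[OF finite_subset[OF assms(2,1)] assms(2)] card_mono[OF assms(1,2)]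
    by (simp flip: power_add)
  finally show ?thesis .
qed

lemma MMS_le_util_div:
  assumes "finite G" and "c > 0"
  shows "MMS c u G \<le> util u G div c"
proof -
  let ?values = "{Min {util u {g\<in>G. p g = i} | i. i < c} | p. \<forall>g\<in>G. p g < c}"
  have bound: "m \<le> util u G div c" if "m \<in> ?values" for m
  proof -
    from that obtain p where p: "\<forall>g\<in>G. p g < c"
      and m: "m = Min {util u {g\<in>G. p g = i} | i. i < c}"
      by blast
    have "{util u {g\<in>G. p g = i} | i. i < c} = (\<lambda>i. util u {g\<in>G. p g = i}) ` {..<c}"
      by auto
    then have "m \<le> util u {g\<in>G. p g = i}" if "i < c" for i
      unfolding m using that by (auto intro: Min_le)
    then have "c * m \<le> (\<Sum>i<c. util u {g\<in>G. p g = i})"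
      using sum_mono[of "{..<c}" "\<lambda>_. m"] by simp
    also have "\<dots> = util u G"
      unfolding util_def using sum.group[OF assms(1), of "{..<c}" p u] p by auto
    finally show ?thesis
      using assms(2) by (simp add: less_eq_div_iff_mult_less_eq mult.commute)
  qed
  moreover have "finite ?values"
    using bound by (auto intro: finite_subset[of _ "{..util u G div c}"])
  moreover have "?values \<noteq> {}"
    using assms(2) by auto
  ultimately show ?thesis
    unfolding MMS_def by (intro Max.boundedI) auto
qed

lemma util_binary_eq_card:
  assumes "binary_on G u" and "S \<subseteq> G" and "finite G"
  shows "util u S = card (S \<inter> {g\<in>G. u g = 1})"
proof -
  have "util u S = (\<Sum>g\<in>S. if u g = 1 then 1 else 0)"
    unfolding util_def using assms(1,2) by (intro sum.cong) (auto simp: binary_on_def)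
  also have "\<dots> = card {g\<in>S. u g = 1}"
    using finite_subset[OF assms(2,3)] by (simp add: sum.inter_filter[symmetric])
  also have "{g\<in>S. u g = 1} = S \<inter> {g\<in>G. u g = 1}"
    using assms(2) by auto
  finally show ?thesis .
qed

lemma mms_fair_if_quota:
  assumes "binary_on G u" and "S \<subseteq> G" and "finite G" and "c > 0"
    and "card (S \<inter> {g\<in>G. u g = 1}) \<ge> card {g\<in>G. u g = 1} div c"
  shows "mms_fair c u G S"
  using MMS_le_util_div[OF assms(3,4), of u] assms(5)
    util_binary_eq_card[OF assms(1-3)] util_binary_eq_card[OF assms(1) order_refl assms(3)]
  unfolding mms_fair_def by (simp add: Int_absorb1)

lemma sum_card_filter_swap:
  assumes "finite A" and "finite P"
  shows "(\<Sum>S\<in>P. card {a\<in>A. R a S}) = (\<Sum>a\<in>A. card {S\<in>P. R a S})"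
proof -
  have "(\<Sum>S\<in>P. card {a\<in>A. R a S}) = (\<Sum>S\<in>P. \<Sum>a\<in>A. if R a S then 1 else 0)"
    using assms(1) by (simp add: sum.inter_filter[symmetric])
  also have "\<dots> = (\<Sum>a\<in>A. \<Sum>S\<in>P. if R a S then 1 else 0)"
    by (rule sum.swap)
  also have "\<dots> = (\<Sum>a\<in>A. card {S\<in>P. R a S})"
    using assms(2) by (simp add: sum.inter_filter[symmetric])
  finally show ?thesis .
qed

text \<open>Summing over all S \<subseteq> G is the expectation of the number of unfair agents when S is
  uniformly random, up to the factor 2^|G|.\<close>

lemma sum_card_not_mms_fair_le:
  assumes "finite G" and "c \<ge> 3" and "finite A" and "\<forall>a\<in>A. binary_on G (u a)"
  shows "2^c * (\<Sum>S\<in>Pow G. card {a\<in>A. \<not> mms_fair c (u a) G S}) \<le> card A * 2 ^ card G"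
proof -
  have "2^c * card {S\<in>Pow G. \<not> mms_fair c (u a) G S} \<le> 2 ^ card G" if "a \<in> A" for a
  proof -
    let ?D = "{g\<in>G. u a g = 1}"
    have "{S\<in>Pow G. \<not> mms_fair c (u a) G S} \<subseteq> {S. S \<subseteq> G \<and> card (S \<inter> ?D) < card ?D div c}"
    proof clarify
      fix S assume "S \<subseteq> G" and "\<not> mms_fair c (u a) G S"
      moreover have "binary_on G (u a)" and "c > 0"
        using assms(2,4) that by auto
      ultimately show "card (S \<inter> ?D) < card ?D div c"
        using mms_fair_if_quota[of G "u a" S c] assms(1) by (meson not_le)
    qed
    then have "card {S\<in>Pow G. \<not> mms_fair c (u a) G S}
        \<le> card {S. S \<subseteq> G \<and> card (S \<inter> ?D) < card ?D div c}"
      using assms(1) by (intro card_mono) (auto intro: finite_subset[of _ "Pow G"])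
    moreover have "2^c * card {S. S \<subseteq> G \<and> card (S \<inter> ?D) < card ?D div c} \<le> 2 ^ card G"
      using assms(1,2) by (intro card_subsets_missing_quota_le) (auto intro: div_times_less_eq_dividend)
    ultimately show ?thesis
      by (meson mult_le_mono2 order_trans)
  qed
  then have "(\<Sum>a\<in>A. 2^c * card {S\<in>Pow G. \<not> mms_fair c (u a) G S}) \<le> card A * 2 ^ card G"
    using sum_bounded_above[of A "\<lambda>a. 2^c * card {S\<in>Pow G. \<not> mms_fair c (u a) G S}" "2 ^ card G"]
    by simp
  then show ?thesis
    using assms(1,3) by (simp add: sum_card_filter_swap sum_distrib_left)
qed

lemma exists_le_average:
  assumes "finite P" and "P \<noteq> {}" and "sum f P \<le> card P * (b::nat)"
  shows "\<exists>S\<in>P. f S \<le> b"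
proof (rule ccontr)
  assume "\<not> (\<exists>S\<in>P. f S \<le> b)"
  then have "(\<Sum>S\<in>P. b) < sum f P"
    using assms(1,2) by (intro sum_strict_mono) auto
  then show False
    using assms(3) by simp
qed

lemma exists_both_le_average:
  fixes f g :: "'s \<Rightarrow> nat"
  assumes "finite P" and "P \<noteq> {}" and "n1 > 0" and "n2 > 0"
    and "2 * m * sum f P \<le> n1 * card P" and "2 * m * sum g P \<le> n2 * card P"
  shows "\<exists>S\<in>P. m * f S \<le> n1 \<and> m * g S \<le> n2"
proof -
  have "2 * (\<Sum>S\<in>P. m * (n2 * f S + n1 * g S)) = n2 * (2 * m * sum f P) + n1 * (2 * m * sum g P)"
    by (simp add: sum.distrib sum_distrib_left sum_distrib_right algebra_simps)
  also have "\<dots> \<le> n2 * (n1 * card P) + n1 * (n2 * card P)"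
    using assms(5,6) by (intro add_mono mult_le_mono2)
  also have "\<dots> = 2 * (card P * (n1 * n2))"
    by (simp add: algebra_simps)
  finally obtain S where "S \<in> P" and "m * (n2 * f S + n1 * g S) \<le> n1 * n2"
    using exists_le_average[OF assms(1,2)] by auto
  then have "m * f S * n2 + m * g S * n1 \<le> n1 * n2"
    by (simp add: algebra_simps)
  then have "m * f S * n2 \<le> n1 * n2" and "m * g S * n1 \<le> n2 * n1"
    unfolding mult.commute[of n2 n1] by linarith+
  with \<open>S \<in> P\<close> assms(3,4) show ?thesis
    by auto
qed

lemma real_card_filter_ge:
  assumes "finite A" and "m > 0" and "m * card {a\<in>A. \<not> Q a} \<le> card A"
  shows "(1 - 1 / real m) * card A \<le> card {a\<in>A. Q a}"
proof -
  have "card {a\<in>A. Q a} + card {a\<in>A. \<not> Q a} = card A"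
    using assms(1) by (subst card_Un_disjoint[symmetric]) (auto intro: arg_cong[where f = card])
  moreover have "card {a\<in>A. \<not> Q a} \<le> card A / real m"
    using assms(2,3) by (simp add: field_simps flip: of_nat_mult)
  ultimately show ?thesis
    by (simp add: algebra_simps flip: of_nat_add)
qed

theorem mainTheorem8:
  fixes c :: nat
    and G :: "'g set"
    and A1 :: "'a set" and A2 :: "'b set"
    and u1 :: "'a \<Rightarrow> 'g \<Rightarrow> nat" and u2 :: "'b \<Rightarrow> 'g \<Rightarrow> nat"
  assumes "c \<ge> 3"
    and "finite G"
    and "finite A1" and "A1 \<noteq> {}" and "finite A2" and "A2 \<noteq> {}"
    and "\<forall>a\<in>A1. binary_on G (u1 a)"
    and "\<forall>a\<in>A2. binary_on G (u2 a)"
  shows "\<exists>G1 G2. G1 \<inter> G2 = {} \<and> G1 \<union> G2 = G \<and>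
      real (card {a\<in>A1. mms_fair c (u1 a) G G1}) \<ge> (1 - 1 / 2 ^ (c - 1)) * real (card A1) \<and>
      real (card {a\<in>A2. mms_fair c (u2 a) G G2}) \<ge> (1 - 1 / 2 ^ (c - 1)) * real (card A2)"
proof -
  let ?unfair1 = "\<lambda>S. card {a\<in>A1. \<not> mms_fair c (u1 a) G S}"
  let ?unfair2 = "\<lambda>S. card {a\<in>A2. \<not> mms_fair c (u2 a) G S}"
  have two_pow: "2 * 2 ^ (c - 1) = (2::nat) ^ c"
    using assms(1) by (simp flip: power_Suc)
  have "bij_betw (\<lambda>S. G - S) (Pow G) (Pow G)"
    by (rule bij_betw_byWitness[where f' = "\<lambda>S. G - S"]) auto
  then have "(\<Sum>S\<in>Pow G. ?unfair2 (G - S)) = (\<Sum>S\<in>Pow G. ?unfair2 S)"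
    by (rule sum.reindex_bij_betw)
  then have "2 * 2 ^ (c - 1) * (\<Sum>S\<in>Pow G. ?unfair1 S) \<le> card A1 * card (Pow G)"
    and "2 * 2 ^ (c - 1) * (\<Sum>S\<in>Pow G. ?unfair2 (G - S)) \<le> card A2 * card (Pow G)"
    unfolding two_pow
    using sum_card_not_mms_fair_le[OF assms(2,1,3,7)] sum_card_not_mms_fair_le[OF assms(2,1,5,8)]
    by (simp_all add: card_Pow assms(2))
  moreover have "card A1 > 0" and "card A2 > 0"
    using assms(3-6) by (simp_all add: card_gt_0_iff)
  ultimately have "\<exists>S\<in>Pow G. 2 ^ (c - 1) * ?unfair1 S \<le> card A1 \<and> 2 ^ (c - 1) * ?unfair2 (G - S) \<le> card A2"
    using assms(2) by (intro exists_both_le_average) (simp_all add: Pow_not_empty)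
  then obtain S where "S \<in> Pow G"
    and unfair1: "2 ^ (c - 1) * ?unfair1 S \<le> card A1"
    and unfair2: "2 ^ (c - 1) * ?unfair2 (G - S) \<le> card A2"
    by blast
  show ?thesis
  proof (intro exI conjI)
    show "S \<inter> (G - S) = {}" and "S \<union> (G - S) = G"
      using \<open>S \<in> Pow G\<close> by auto
    show "(1 - 1 / 2 ^ (c - 1)) * real (card A1) \<le> card {a\<in>A1. mms_fair c (u1 a) G S}"
      using real_card_filter_ge[OF assms(3) _ unfair1] by simp
    show "(1 - 1 / 2 ^ (c - 1)) * real (card A2) \<le> card {a\<in>A2. mms_fair c (u2 a) G (G - S)}"
      using real_card_filter_ge[OF assms(5) _ unfair2] by simp
  qed
qed

end
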